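(* Let $h\in C[0,1]$, $c\in\mathbb R$, and let $q\in C[0,1]$ with $q>0$ on $(0,1)$. If $z\in C^1(0,1)$ satisfies $\dot z(\varphi)=h(\varphi)-c-q(\varphi)/z(\varphi)$ and $z(\varphi)<0$ for all $\varphi\in(0,1)$, then the limits $z(0^+)$ and $z(1^-)$ exist and are finite (and lie in $(-\infty,0]$), so $z$ extends continuously to $[0,1]$. *)

theory Defs
  imports "HOL-Analysis.Analysis"
begin

end

theory Submission
  imports Defs
begin

text \<open>Since \<open>q > 0\<close> and \<open>z < 0\<close>, the term \<open>-q/z\<close> is positive, so \<open>z' \<ge> -M\<close> for a bound \<open>M\<close>
  of \<open>|h - c|\<close>: the function \<open>z(\<phi>) + M\<phi>\<close> is nondecreasing and therefore has one-sided limits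
  wherever it is bounded. Near \<open>1\<close> it is bounded above because \<open>z < 0\<close>. Near \<open>0\<close> a lower bound
  comes from \<open>2zz' = 2z(h - c) - 2q \<ge> -(z\<^sup>2 + K)\<close> with \<open>K = M\<^sup>2 + 2 sup q\<close>: the quantity
  \<open>e\<^sup>\<phi>(z\<^sup>2 + K)\<close> is nondecreasing, so \<open>z\<^sup>2\<close> stays bounded as \<open>\<phi> \<rightarrow> 0\<close>.\<close>

lemma mono_on_Ioo_if_derivative_nonneg:
  fixes f :: "real \<Rightarrow> real"
  assumes "\<And>t. t \<in> {a<..<b} \<Longrightarrow> (f has_real_derivative f' t) (at t)"
    and "\<And>t. t \<in> {a<..<b} \<Longrightarrow> 0 \<le> f' t"
  shows "mono_on {a<..<b} f"
proof (rule mono_onI)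
  fix x y assume "x \<in> {a<..<b}" "y \<in> {a<..<b}" "x \<le> y"
  then show "f x \<le> f y"
  proof (intro DERIV_nonneg_imp_nondecreasing[OF \<open>x \<le> y\<close>])
    fix t assume "x \<le> t" "t \<le> y"
    with \<open>x \<in> {a<..<b}\<close> \<open>y \<in> {a<..<b}\<close> have "t \<in> {a<..<b}" by auto
    with assms show "\<exists>d. (f has_real_derivative d) (at t) \<and> 0 \<le> d" by blast
  qed
qed

lemma mono_on_Ioo_has_limit_at_right:
  fixes f :: "real \<Rightarrow> real"
  assumes "a < b" "mono_on {a<..<b} f" "\<And>x. x \<in> {a<..<b} \<Longrightarrow> K \<le> f x"
  shows "\<exists>l. (f \<longlongrightarrow> l) (at_right a)"
proof -
  have "(f \<longlongrightarrow> Inf (f ` ({a<..} \<inter> {a<..<b}))) (at a within {a<..} \<inter> {a<..<b})"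
    by (rule Lim_right_bound) (use assms(3) in \<open>auto intro: mono_onD[OF assms(2)]\<close>)
  moreover have "at a within {a<..} \<inter> {a<..<b} = at_right a"
    using \<open>a < b\<close> by (intro at_within_nhd[of _ "{..<b}"]) auto
  ultimately show ?thesis by auto
qed

lemma mono_on_Ioo_has_limit_at_left:
  fixes f :: "real \<Rightarrow> real"
  assumes "a < b" "mono_on {a<..<b} f" "\<And>x. x \<in> {a<..<b} \<Longrightarrow> f x \<le> K"
  shows "\<exists>l. (f \<longlongrightarrow> l) (at_left b)"
proof -
  have "(f \<longlongrightarrow> Sup (f ` ({..<b} \<inter> {a<..<b}))) (at b within {..<b} \<inter> {a<..<b})"
    by (rule Lim_left_bound) (use assms(3) in \<open>auto intro: mono_onD[OF assms(2)]\<close>)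
  moreover have "at b within {..<b} \<inter> {a<..<b} = at_left b"
    using \<open>a < b\<close> by (intro at_within_nhd[of _ "{a<..}"]) auto
  ultimately show ?thesis by auto
qed

lemma continuous_on_Icc_extension:
  fixes f :: "real \<Rightarrow> 'b::topological_space"
  assumes "a < b" "continuous_on {a<..<b} f"
    and "(f \<longlongrightarrow> l) (at_right a)" "(f \<longlongrightarrow> r) (at_left b)"
  shows "continuous_on {a..b} (\<lambda>x. if x = a then l else if x = b then r else f x)"
    (is "continuous_on _ ?F")
proof (rule continuous_on_IccI)
  have "eventually (\<lambda>x. f x = ?F x) (at_right a)"
    using eventually_at_right_real[OF \<open>a < b\<close>] by eventually_elim auto
  with assms(3) show "(?F \<longlongrightarrow> ?F a) (at_right a)"
    by (simp add: Lim_transform_eventually)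
  have "eventually (\<lambda>x. f x = ?F x) (at_left b)"
    using eventually_at_left_real[OF \<open>a < b\<close>] by eventually_elim auto
  with assms(1,4) show "(?F \<longlongrightarrow> ?F b) (at_left b)"
    by (simp add: Lim_transform_eventually)
  fix x assume "a < x" "x < b"
  then have "eventually (\<lambda>y. y \<in> {a<..<b}) (at x)"
    by (intro eventually_at_in_open') auto
  then have "eventually (\<lambda>y. f y = ?F y) (at x)"
    by eventually_elim auto
  moreover have "isCont f x"
    using assms(2) \<open>a < x\<close> \<open>x < b\<close> by (simp add: continuous_on_eq_continuous_at)
  ultimately show "?F \<midarrow>x\<rightarrow> ?F x"
    using \<open>a < x\<close> \<open>x < b\<close> by (simp add: isCont_def Lim_transform_eventually)
qed (fact \<open>a < b\<close>)

lemma continuous_on_Icc_abs_bound: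
  fixes f :: "real \<Rightarrow> real"
  assumes "continuous_on {a..b} f"
  obtains M where "\<And>x. x \<in> {a..b} \<Longrightarrow> \<bar>f x\<bar> \<le> M"
proof -
  have "bounded (f ` {a..b})"
    by (intro compact_imp_bounded compact_continuous_image assms) auto
  then obtain M where "\<forall>y\<in>f ` {a..b}. \<bar>y\<bar> \<le> M"
    unfolding bounded_iff real_norm_def by blast
  then show thesis
    by (intro that) auto
qed

lemma mono_on_add_linear_if_derivative_ge:
  fixes f :: "real \<Rightarrow> real"
  assumes "\<And>t. t \<in> {a<..<b} \<Longrightarrow> (f has_real_derivative f' t) (at t)"
    and "\<And>t. t \<in> {a<..<b} \<Longrightarrow> - M \<le> f' t"
  shows "mono_on {a<..<b} (\<lambda>x. f x + M * x)"
proof (rule mono_on_Ioo_if_derivative_nonneg)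
  fix t assume "t \<in> {a<..<b}"
  then show "((\<lambda>x. f x + M * x) has_real_derivative f' t + M) (at t)"
    using assms(1) by (auto intro!: derivative_eq_intros)
  show "0 \<le> f' t + M" using assms(2) \<open>t \<in> {a<..<b}\<close> by fastforce
qed

lemma has_limit_at_right_if_derivative_ge_and_bounded_below:
  fixes f :: "real \<Rightarrow> real"
  assumes "a < b" "0 \<le> M"
    and "\<And>t. t \<in> {a<..<b} \<Longrightarrow> (f has_real_derivative f' t) (at t)"
    and "\<And>t. t \<in> {a<..<b} \<Longrightarrow> - M \<le> f' t"
    and "\<And>t. t \<in> {a<..<b} \<Longrightarrow> K \<le> f t"
  shows "\<exists>l. (f \<longlongrightarrow> l) (at_right a)"
proof -
  have "\<exists>l. ((\<lambda>x. f x + M * x) \<longlongrightarrow> l) (at_right a)"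
  proof (rule mono_on_Ioo_has_limit_at_right[OF \<open>a < b\<close>])
    show "mono_on {a<..<b} (\<lambda>x. f x + M * x)"
      using assms(3,4) by (rule mono_on_add_linear_if_derivative_ge)
    show "K + M * a \<le> f x + M * x" if "x \<in> {a<..<b}" for x
      using assms(5)[OF that] mult_left_mono[of a x M] assms(2) that by auto
  qed
  then obtain l where "((\<lambda>x. f x + M * x) \<longlongrightarrow> l) (at_right a)" by blast
  then have "((\<lambda>x. (f x + M * x) - M * x) \<longlongrightarrow> l - M * a) (at_right a)"
    by (intro tendsto_intros tendsto_ident_at)
  then show ?thesis by auto
qed

lemma has_limit_at_left_if_derivative_ge_and_bounded_above:
  fixes f :: "real \<Rightarrow> real"
  assumes "a < b" "0 \<le> M"
    and "\<And>t. t \<in> {a<..<b} \<Longrightarrow> (f has_real_derivative f' t) (at t)"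
    and "\<And>t. t \<in> {a<..<b} \<Longrightarrow> - M \<le> f' t"
    and "\<And>t. t \<in> {a<..<b} \<Longrightarrow> f t \<le> K"
  shows "\<exists>l. (f \<longlongrightarrow> l) (at_left b)"
proof -
  have "\<exists>l. ((\<lambda>x. f x + M * x) \<longlongrightarrow> l) (at_left b)"
  proof (rule mono_on_Ioo_has_limit_at_left[OF \<open>a < b\<close>])
    show "mono_on {a<..<b} (\<lambda>x. f x + M * x)"
      using assms(3,4) by (rule mono_on_add_linear_if_derivative_ge)
    show "f x + M * x \<le> K + M * b" if "x \<in> {a<..<b}" for x
      using assms(5)[OF that] mult_left_mono[of x b M] assms(2) that by auto
  qed
  then obtain l where "((\<lambda>x. f x + M * x) \<longlongrightarrow> l) (at_left b)" by blast
  then have "((\<lambda>x. (f x + M * x) - M * x) \<longlongrightarrow> l - M * b) (at_left b)"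
    by (intro tendsto_intros tendsto_ident_at)
  then show ?thesis by auto
qed

lemma Gronwall_abs_bound_backward:
  fixes f :: "real \<Rightarrow> real"
  assumes "\<And>t. t \<in> {a<..<b} \<Longrightarrow> (f has_real_derivative f' t) (at t)"
    and "\<And>t. t \<in> {a<..<b} \<Longrightarrow> 0 \<le> 2 * f t * f' t + (f t)\<^sup>2 + K"
    and "0 \<le> K" "a < x" "x \<le> y" "y < b"
  shows "\<bar>f x\<bar> \<le> sqrt (exp (y - a) * ((f y)\<^sup>2 + K))"
proof -
  have "mono_on {a<..<b} (\<lambda>t. exp t * ((f t)\<^sup>2 + K))"
  proof (rule mono_on_Ioo_if_derivative_nonneg)
    fix t assume t: "t \<in> {a<..<b}"
    then show "((\<lambda>t. exp t * ((f t)\<^sup>2 + K)) has_real_derivative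
        exp t * (2 * f t * f' t + (f t)\<^sup>2 + K)) (at t)"
      using assms(1) by (auto intro!: derivative_eq_intros simp: algebra_simps)
    show "0 \<le> exp t * (2 * f t * f' t + (f t)\<^sup>2 + K)"
      using assms(2)[OF t] by simp
  qed
  then have "exp x * ((f x)\<^sup>2 + K) \<le> exp y * ((f y)\<^sup>2 + K)"
    using assms(4-6) by (auto elim!: mono_onD)
  then have "(f x)\<^sup>2 + K \<le> exp (y - x) * ((f y)\<^sup>2 + K)"
    by (simp add: exp_diff field_simps)
  also have "\<dots> \<le> exp (y - a) * ((f y)\<^sup>2 + K)"
    using assms(3,4) by (intro mult_right_mono) auto
  finally show ?thesis
    using \<open>0 \<le> K\<close> by (intro real_le_rsqrt) simp
qed

lemma Riccati_slope_bounds: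
  fixes z q d M Q :: real
  assumes "z < 0" "0 < q" "q \<le> Q" "\<bar>d\<bar> \<le> M"
  shows "- M \<le> d - q / z"
    and "0 \<le> 2 * z * (d - q / z) + z\<^sup>2 + (M\<^sup>2 + 2 * Q)"
proof -
  show "- M \<le> d - q / z"
    using assms divide_pos_neg[of q z] by linarith
  have "2 * z * (d - q / z) = 2 * z * d - 2 * q"
    using assms(1) by (simp add: field_simps)
  moreover have "d\<^sup>2 \<le> M\<^sup>2"
    using power_mono[OF assms(4), of 2] by simp
  moreover have "0 \<le> (z + d)\<^sup>2" by simp
  ultimately show "0 \<le> 2 * z * (d - q / z) + z\<^sup>2 + (M\<^sup>2 + 2 * Q)"
    using assms(3) by (simp add: power2_sum)
qed

lemma negative_Riccati_solution_has_limits: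
  fixes d q z :: "real \<Rightarrow> real"
  assumes "a < b"
    and d_bound: "\<And>t. t \<in> {a<..<b} \<Longrightarrow> \<bar>d t\<bar> \<le> M"
    and q_pos: "\<And>t. t \<in> {a<..<b} \<Longrightarrow> 0 < q t"
    and q_bound: "\<And>t. t \<in> {a<..<b} \<Longrightarrow> q t \<le> Q"
    and z_ode: "\<And>t. t \<in> {a<..<b} \<Longrightarrow> (z has_real_derivative d t - q t / z t) (at t)"
    and z_neg: "\<And>t. t \<in> {a<..<b} \<Longrightarrow> z t < 0"
  shows "\<exists>l. (z \<longlongrightarrow> l) (at_right a)" and "\<exists>l. (z \<longlongrightarrow> l) (at_left b)"
proof -
  define m where "m = (a + b) / 2"
  have m: "m \<in> {a<..<b}" using \<open>a < b\<close> by (simp add: m_def)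
  have "0 \<le> M" "0 \<le> Q"
    using d_bound[OF m] q_pos[OF m] q_bound[OF m] by linarith+
  define z' where "z' t = d t - q t / z t" for t
  have z_deriv: "(z has_real_derivative z' t) (at t)" if "t \<in> {a<..<b}" for t
    using z_ode[OF that] unfolding z'_def .
  have slope: "- M \<le> z' t" and energy: "0 \<le> 2 * z t * z' t + (z t)\<^sup>2 + (M\<^sup>2 + 2 * Q)"
    if "t \<in> {a<..<b}" for t
    unfolding z'_def using Riccati_slope_bounds[OF z_neg q_pos q_bound d_bound] that by blast+
  show "\<exists>l. (z \<longlongrightarrow> l) (at_left b)"
    using \<open>a < b\<close> \<open>0 \<le> M\<close> z_deriv slope z_neg
    by (intro has_limit_at_left_if_derivative_ge_and_bounded_above[of a b M z z' 0])
      (auto intro: less_imp_le)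
  define B where "B = sqrt (exp (m - a) * ((z m)\<^sup>2 + (M\<^sup>2 + 2 * Q)))"
  have "\<bar>z x\<bar> \<le> B" if "x \<in> {a<..<m}" for x
    unfolding B_def
    by (rule Gronwall_abs_bound_backward[OF z_deriv energy]) (use that m \<open>0 \<le> Q\<close> in auto)
  then have "- B \<le> z x" if "x \<in> {a<..<m}" for x
    using that by fastforce
  moreover have "(z has_real_derivative z' t) (at t)" "- M \<le> z' t" if "t \<in> {a<..<m}" for t
    using z_deriv slope that m by auto
  ultimately show "\<exists>l. (z \<longlongrightarrow> l) (at_right a)"
    using \<open>0 \<le> M\<close> m by (intro has_limit_at_right_if_derivative_ge_and_bounded_below[of a m]) auto
qed

theorem lemma3p1:
  fixes h q z :: "real \<Rightarrow> real" and c :: real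
  assumes h_cont: "continuous_on {0..1} h"
    and q_cont: "continuous_on {0..1} q"
    and q_pos: "\<And>\<phi>. \<phi> \<in> {0<..<1} \<Longrightarrow> q \<phi> > 0"
    and z_C1: "continuous_on {0<..<1} (deriv z)"
    and z_ode: "\<And>\<phi>. \<phi> \<in> {0<..<1} \<Longrightarrow>
                  (z has_real_derivative (h \<phi> - c - q \<phi> / z \<phi>)) (at \<phi>)"
    and z_neg: "\<And>\<phi>. \<phi> \<in> {0<..<1} \<Longrightarrow> z \<phi> < 0"
  shows "\<exists>z0 z1. z0 \<le> 0 \<and> z1 \<le> 0 \<and>
           (z \<longlongrightarrow> z0) (at_right 0) \<and> (z \<longlongrightarrow> z1) (at_left 1) \<and>
           continuous_on {0..1} (\<lambda>\<phi>. if \<phi> = 0 then z0 else if \<phi> = 1 then z1 else z \<phi>)"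
proof -
  have "continuous_on {0..1} (\<lambda>x. h x - c)"
    using h_cont by (intro continuous_intros)
  then obtain M where M: "\<And>x. x \<in> {0..1} \<Longrightarrow> \<bar>h x - c\<bar> \<le> M"
    using continuous_on_Icc_abs_bound by metis
  obtain Q where Q: "\<And>x. x \<in> {0..1} \<Longrightarrow> \<bar>q x\<bar> \<le> Q"
    using continuous_on_Icc_abs_bound[OF q_cont] by metis
  have "\<bar>h t - c\<bar> \<le> M" "q t \<le> Q" if "t \<in> {0<..<1}" for t
    using M[of t] Q[of t] that by auto
  then have "\<exists>l. (z \<longlongrightarrow> l) (at_right 0)" "\<exists>l. (z \<longlongrightarrow> l) (at_left 1)"
    using negative_Riccati_solution_has_limits[OF zero_less_one _ q_pos _ z_ode z_neg] by blast+
  then obtain z0 z1 where z0: "(z \<longlongrightarrow> z0) (at_right 0)" and z1: "(z \<longlongrightarrow> z1) (at_left 1)"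
    by blast
  have "eventually (\<lambda>x. z x \<le> 0) (at_right 0)" "eventually (\<lambda>x. z x \<le> 0) (at_left 1)"
    using eventually_at_right_real[of 0 1] eventually_at_left_real[of 0 1] z_neg
    by (auto elim!: eventually_mono intro: less_imp_le)
  then have "z0 \<le> 0" "z1 \<le> 0"
    by (auto intro: tendsto_upperbound[OF z0] tendsto_upperbound[OF z1])
  moreover have "continuous_on {0<..<1} z"
    by (rule DERIV_continuous_on[OF has_field_derivative_at_within[OF z_ode]])
  ultimately show ?thesis
    using continuous_on_Icc_extension[of 0 1 z z0 z1] z0 z1 by auto
qed

end
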